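(* Let $m\in\mathbb R$ satisfy $D^-M(m)\le0\le D^+M(m)$ and assume the boundedness condition (B) holds with functions $a,b$ whose one-sided limits $a(0+),a(0-),b(0+),b(0-)$ exist and are finite. Assume further there are constants $c>0$, $\delta>0$ with $$|D^+M(m+x)|\ge c\,|x|\qquad\forall x\in[-\delta,\delta].$$ Then for every $\gamma<1/2$ and every $r>0$, $$\sum_{n=1}^\infty n^{r-1}\,\mathbb P\Big(n^\gamma\sup_{k\ge n}|\hat m_k-m|>\epsilon\Big)<\infty\qquad\forall\epsilon>0,$$ i.e. $\sup_{k\ge n}|\hat m_k-m|=o(n^{-\gamma})$ $\mathbb P$-$r$-completely.
   Context: Let $(S,\mathcal S,Q)$ be a probability space and $h:S\times\mathbb R\to\mathbb R$ such that $h(\cdot,t)$ is $\mathcal S$-measurable for every $t\in\mathbb R$ and $h(x,\cdot)$ is convex for every $x\in S$. For $f:\mathbb R\to\mathbb R$ convex, $D^+f$ and $D^-f$ denote its right and left derivatives; $D^\pm h(x,t)$ denotes the one-sided derivatives of $h(x,\cdot)$ at $t$. Assume $\int_S|D^+h(x,t)|\,Q(dx)<\infty$ and $\int_S|D^-h(x,t)|\,Q(dx)<\infty$ for all $t\in\mathbb R$. Fix $t_0\in\mathbb R$ and set $M(t):=\int_S (h(x,t)-h(x,t_0))\,Q(dx)$; $M$ is real-valued and convex with $D^\pm M(t)=\int_S D^\pm h(x,t)\,Q(dx)$. Let $X_1,X_2,\dots$ be i.i.d. $S$-valued random variables on a probability space $(\Omega,\mathcal A,\mathbb P)$ with common law $Q$,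 let $M_n(t):=\frac1n\sum_{i=1}^n (h(X_i,t)-h(X_i,t_0))$, and let $\hat m_n$ be the smallest minimizing point of $M_n$ (assumed to exist; it is a random variable). Boundedness condition (B): for every $x\neq 0$ there are reals $a(x)<b(x)$ with $a(x)\le D^+h(X_1,m+x)\le b(x)$ almost surely. *)

theory Defs
  imports "HOL-Probability.Probability"
begin

definition rderiv :: "(real \<Rightarrow> real) \<Rightarrow> real \<Rightarrow> real" where
  "rderiv f t = Lim (at_right 0) (\<lambda>s. (f (t + s) - f t) / s)"

definition lderiv :: "(real \<Rightarrow> real) \<Rightarrow> real \<Rightarrow> real" where
  "lderiv f t = Lim (at_left 0) (\<lambda>s. (f (t + s) - f t) / s)"

end

theory Submission
  imports Defs "HOL-Real_Asymp.Real_Asymp"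
begin

(* Since mhat k is the least minimiser of the convex empirical risk, the event mhat k > m + x
   forces the empirical right derivative at m + x to be negative, and mhat k < m - x forces the
   one at m - x to be nonnegative. Convexity of M and the growth condition put the mean of these
   derivatives at distance at least c x / 2 from 0, with the opposite sign, so Hoeffding's
   inequality for the bounded i.i.d. summands gives
   P(|mhat k - m| > x) <= 2 exp(- k c^2 x^2 / (2 L^2)), L bounding b - a near 0.
   For x = theta k^(-gamma) this decays like exp(- D k^(1 - 2 gamma)), fast enough to make the
   union over k >= n, weighted by n^(r - 1), summable. *)

section \<open>One-sided derivatives of convex functions\<close>

lemma tendsto_Inf_at_right_0:
  fixes q :: "real \<Rightarrow> real"
  assumes mono: "\<And>s s'. 0 < s \<Longrightarrow> s \<le> s' \<Longrightarrow> q s \<le> q s'"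
    and bdd: "\<And>s. 0 < s \<Longrightarrow> B \<le> q s"
  shows "(q \<longlongrightarrow> Inf (q ` {0<..})) (at_right 0)"
proof (rule order_tendstoI)
  have bb: "bdd_below (q ` {0<..})" using bdd by (auto intro!: bdd_belowI)
  fix y assume "y < Inf (q ` {0<..})"
  then have "\<forall>s>0. y < q s"
    using cInf_lower[OF _ bb] by (meson greaterThan_iff image_eqI less_le_trans)
  then show "eventually (\<lambda>s. y < q s) (at_right 0)"
    by (intro eventually_at_rightI[of 0 1]) auto
next
  fix y assume "Inf (q ` {0<..}) < y"
  then obtain s0 where s0: "s0 > 0" "q s0 < y"
    using cInf_lessD[of "q ` {0<..}" y] by auto
  show "eventually (\<lambda>s. q s < y) (at_right 0)"
    using s0 mono by (intro eventually_at_rightI[of 0 s0]) (auto, meson le_less_trans less_imp_le)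
qed

lemma tendsto_Sup_at_left_0:
  fixes q :: "real \<Rightarrow> real"
  assumes mono: "\<And>s s'. s \<le> s' \<Longrightarrow> s' < 0 \<Longrightarrow> q s \<le> q s'"
    and bdd: "\<And>s. s < 0 \<Longrightarrow> q s \<le> B"
  shows "(q \<longlongrightarrow> Sup (q ` {..<0})) (at_left 0)"
proof (rule order_tendstoI)
  have bb: "bdd_above (q ` {..<0})" using bdd by (auto intro!: bdd_aboveI)
  fix y assume "Sup (q ` {..<0}) < y"
  then have "\<forall>s<0. q s < y"
    using cSup_upper[OF _ bb] by (meson lessThan_iff image_eqI le_less_trans)
  then show "eventually (\<lambda>s. q s < y) (at_left 0)"
    by (intro eventually_at_leftI[of "-1" 0]) auto
next
  fix y assume "y < Sup (q ` {..<0})"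
  then obtain s0 where s0: "s0 < 0" "y < q s0"
    using less_cSupD[of "q ` {..<0}" y] by auto
  show "eventually (\<lambda>s. y < q s) (at_left 0)"
    using s0 mono by (intro eventually_at_leftI[of s0 0]) (auto intro: less_le_trans)
qed

lemma diff_quotient_swap: "((a::real) - b) / (c - d) = (b - a) / (d - c)"
  by (metis minus_diff_eq minus_divide_divide)

lemma convex_on_diff_quotient_mono:
  fixes f :: "real \<Rightarrow> real"
  assumes f: "convex_on UNIV f" and s: "s < s'" "s \<noteq> 0" "s' \<noteq> 0"
  shows "(f (t + s) - f t) / s \<le> (f (t + s') - f t) / s'"
proof -
  note flip = diff_quotient_swap[of "f x" "f y" x y for x y]
  consider "0 < s" | "s < 0" "0 < s'" | "s' < 0" using s by linarith
  then show ?thesis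
  proof cases
    case 1
    then show ?thesis
      using convex_on_slope_le(1)[OF f, of t "t + s'" "t + s"] s flip[of t "t + s"] flip[of t "t + s'"]
      by simp
  next
    case 2
    then show ?thesis
      using convex_on_slope_le[OF f, of "t + s" "t + s'" t] flip[of t "t + s"] flip[of t "t + s'"]
      by simp
  next
    case 3
    then show ?thesis
      using convex_on_slope_le(2)[OF f, of "t + s" t "t + s'"] s by simp
  qed
qed

lemma
  fixes f :: "real \<Rightarrow> real"
  assumes f: "convex_on UNIV f"
  shows convex_on_rderiv_tendsto: "((\<lambda>s. (f (t + s) - f t) / s) \<longlongrightarrow> rderiv f t) (at_right 0)"
    and convex_on_rderiv_le_slope: "t < u \<Longrightarrow> rderiv f t \<le> (f u - f t) / (u - t)"
    and convex_on_slope_le_rderiv: "v < t \<Longrightarrow> (f t - f v) / (t - v) \<le> rderiv f t"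
proof -
  define q where "q s = (f (t + s) - f t) / s" for s
  have mono: "q s \<le> q s'" if "0 < s" "s \<le> s'" for s s'
    using convex_on_diff_quotient_mono[OF f, of s s' t] that unfolding q_def
    by (cases "s = s'") auto
  have lower: "(f t - f v) / (t - v) \<le> q s" if "v < t" "0 < s" for v s
    using convex_on_diff_quotient_mono[OF f, of "v - t" s t] that
      diff_quotient_swap[of "f v" "f t" v t]
    unfolding q_def by simp
  have lim: "(q \<longlongrightarrow> Inf (q ` {0<..})) (at_right 0)"
    by (rule tendsto_Inf_at_right_0[OF mono lower[of "t - 1"]]) auto
  have rderiv_eq: "rderiv f t = Inf (q ` {0<..})"
    unfolding rderiv_def q_def[symmetric] using lim by (intro tendsto_Lim) auto
  have bdd: "bdd_below (q ` {0<..})" using lower[of "t - 1"] by (auto intro!: bdd_belowI)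
  show "((\<lambda>s. (f (t + s) - f t) / s) \<longlongrightarrow> rderiv f t) (at_right 0)"
    using lim rderiv_eq unfolding q_def by simp
  show "rderiv f t \<le> (f u - f t) / (u - t)" if "t < u"
  proof -
    have "rderiv f t \<le> q (u - t)"
      unfolding rderiv_eq using bdd that by (auto intro: cInf_lower)
    then show ?thesis unfolding q_def by simp
  qed
  show "v < t \<Longrightarrow> (f t - f v) / (t - v) \<le> rderiv f t"
    unfolding rderiv_eq using lower by (auto intro: cInf_greatest)
qed

lemma convex_on_slope_le_lderiv:
  fixes f :: "real \<Rightarrow> real"
  assumes f: "convex_on UNIV f" and "v < t"
  shows "(f t - f v) / (t - v) \<le> lderiv f t"
proof -
  define q where "q s = (f (t + s) - f t) / s" for s
  have mono: "q s \<le> q s'" if "s \<le> s'" "s' < 0" for s s'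
    using convex_on_diff_quotient_mono[OF f, of s s' t] that unfolding q_def
    by (cases "s = s'") auto
  have upper: "q s \<le> f (t + 1) - f t" if "s < 0" for s
    using convex_on_diff_quotient_mono[OF f, of s 1 t] that unfolding q_def by auto
  have lim: "(q \<longlongrightarrow> Sup (q ` {..<0})) (at_left 0)"
    by (rule tendsto_Sup_at_left_0[OF mono upper]) auto
  have lderiv_eq: "lderiv f t = Sup (q ` {..<0})"
    unfolding lderiv_def q_def[symmetric] using lim by (intro tendsto_Lim) auto
  have "q (v - t) \<le> lderiv f t"
    unfolding lderiv_eq using upper \<open>v < t\<close> by (auto intro!: cSup_upper bdd_aboveI)
  then show ?thesis
    unfolding q_def using diff_quotient_swap[of "f v" "f t" v t] by simp
qed

lemma convex_on_sum_fun:
  fixes f :: "'i \<Rightarrow> real \<Rightarrow> real"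
  shows "finite I \<Longrightarrow> (\<And>i. i \<in> I \<Longrightarrow> convex_on UNIV (f i)) \<Longrightarrow> convex_on UNIV (\<lambda>x. \<Sum>i\<in>I. f i x)"
  by (induction I rule: finite_induct) (auto simp: convex_on_const intro!: convex_on_add)

lemma rderiv_sum_convex:
  fixes f :: "'i \<Rightarrow> real \<Rightarrow> real"
  assumes "finite I" and f: "\<And>i. i \<in> I \<Longrightarrow> convex_on UNIV (f i)"
  shows "rderiv (\<lambda>x. \<Sum>i\<in>I. f i x) t = (\<Sum>i\<in>I. rderiv (f i) t)"
proof -
  have "((\<lambda>s. ((\<Sum>i\<in>I. f i (t + s)) - (\<Sum>i\<in>I. f i t)) / s) \<longlongrightarrow> (\<Sum>i\<in>I. rderiv (f i) t))
      (at_right 0)"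
    using tendsto_sum[OF convex_on_rderiv_tendsto[OF f]]
    by (simp add: sum_divide_distrib[symmetric] sum_subtractf)
  then show ?thesis
    unfolding rderiv_def by (intro tendsto_Lim) auto
qed

lemma convex_on_rderiv_nonneg_right_of_min:
  fixes f :: "real \<Rightarrow> real"
  assumes f: "convex_on UNIV f" and min: "\<And>u. f p \<le> f u" and "p \<le> t"
  shows "0 \<le> rderiv f t"
proof (cases "p < t")
  case True
  have "0 \<le> (f t - f p) / (t - p)" using min[of t] True by simp
  also have "\<dots> \<le> rderiv f t" by (rule convex_on_slope_le_rderiv[OF f True])
  finally show ?thesis .
next
  case False
  with \<open>p \<le> t\<close> have "\<forall>\<^sub>F s in at_right 0. 0 \<le> (f (t + s) - f t) / s"
    using min by (intro eventually_at_rightI[of 0 1]) auto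
  then show ?thesis
    by (rule tendsto_lowerbound[OF convex_on_rderiv_tendsto[OF f]]) simp
qed

lemma convex_on_rderiv_neg_left_of_least_min:
  fixes f :: "real \<Rightarrow> real"
  assumes f: "convex_on UNIV f" and min: "\<And>u. f p \<le> f u"
    and least: "\<And>u. (\<forall>s. f u \<le> f s) \<Longrightarrow> p \<le> u" and "t < p"
  shows "rderiv f t < 0"
proof (rule ccontr)
  assume "\<not> rderiv f t < 0"
  then have "0 \<le> (f p - f t) / (p - t)"
    using convex_on_rderiv_le_slope[OF f \<open>t < p\<close>] by linarith
  then have "f t \<le> f p" using \<open>t < p\<close> by (simp add: zero_le_divide_iff)
  then have "p \<le> t" using min by (intro least) (meson order_trans)
  with \<open>t < p\<close> show False by simp
qed

lemma eventually_le_at_of_one_sided_limits: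
  fixes f :: "real \<Rightarrow> real"
  assumes "(f \<longlongrightarrow> l1) (at_left x)" "(f \<longlongrightarrow> l2) (at_right x)"
  shows "\<exists>L>0. \<forall>\<^sub>F z in at x. f z \<le> L"
proof (intro exI conjI)
  let ?L = "max (max l1 l2) 0 + 1"
  show "?L > 0" by simp
  have "\<forall>\<^sub>F z in at_left x. f z < ?L" "\<forall>\<^sub>F z in at_right x. f z < ?L"
    using assms by (auto intro: order_tendstoD(2))
  then show "\<forall>\<^sub>F z in at x. f z \<le> ?L"
    by (subst at_eq_sup_left_right) (auto simp: eventually_sup elim: eventually_mono)
qed

lemma summable_powr_mult_exp_neg_powr:
  assumes "D > 0" "\<beta> > 0"
  shows "summable (\<lambda>n::nat. real (Suc n) powr \<rho> * exp (- D * real (Suc n) powr \<beta>))"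
proof -
  have "((\<lambda>x::real. x powr (\<rho> + 2) * exp (- D * x powr \<beta>)) \<longlongrightarrow> 0) at_top"
    using assms by real_asymp
  moreover have "filterlim (\<lambda>n::nat. real (Suc n)) at_top sequentially"
    by (rule filterlim_compose[OF filterlim_real_sequentially filterlim_Suc])
  ultimately have "((\<lambda>n::nat. real (Suc n) powr (\<rho> + 2) * exp (- D * real (Suc n) powr \<beta>))
      \<longlongrightarrow> 0) sequentially"
    by (rule filterlim_compose[unfolded o_def])
  then have small: "\<forall>\<^sub>F n in sequentially.
      real (Suc n) powr (\<rho> + 2) * exp (- D * real (Suc n) powr \<beta>) < 1"
    by (rule order_tendstoD) simp
  have "summable (\<lambda>n::nat. real (Suc n) powr (-2))"
    using summable_Suc_iff[of "\<lambda>n. real n powr (-2)"] summable_real_powr_iff[of "-2"] by simp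
  then show ?thesis
  proof (rule summable_comparison_test_ev[rotated])
    show "\<forall>\<^sub>F n in sequentially. norm (real (Suc n) powr \<rho> * exp (- D * real (Suc n) powr \<beta>))
        \<le> real (Suc n) powr (-2)"
      using small
    proof eventually_elim
      case (elim n)
      have "real (Suc n) powr \<rho> * exp (- D * real (Suc n) powr \<beta>)
          = (real (Suc n) powr (\<rho> + 2) * exp (- D * real (Suc n) powr \<beta>)) * real (Suc n) powr (-2)"
        by (simp add: powr_add[symmetric])
      also have "\<dots> \<le> real (Suc n) powr (-2)"
        using elim by (intro mult_left_le_one_le) auto
      finally show ?case by simp
    qed
  qed
qed

lemma exp_neg_powr_add_le:
  fixes D \<beta> :: real and j n :: nat
  assumes "D > 0" "\<beta> > 0"
  shows "exp (- D * real (Suc n + j) powr \<beta>)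
     \<le> exp (- (D/2) * real (Suc n) powr \<beta>) * exp (- (D/2) * real (Suc j) powr \<beta>)"
proof -
  have "real (Suc n) powr \<beta> \<le> real (Suc n + j) powr \<beta>"
       "real (Suc j) powr \<beta> \<le> real (Suc n + j) powr \<beta>"
    using assms by (auto intro!: powr_mono2)
  then have "(D/2) * real (Suc n) powr \<beta> + (D/2) * real (Suc j) powr \<beta>
      \<le> (D/2) * real (Suc n + j) powr \<beta> + (D/2) * real (Suc n + j) powr \<beta>"
    using assms by (intro add_mono mult_left_mono) auto
  then show ?thesis by (simp add: exp_add[symmetric])
qed

section \<open>Tail events with stretched-exponential bounds\<close>

lemma (in prob_space) measure_UN_tail_le:
  fixes A :: "nat \<Rightarrow> 'a set"
  assumes D: "D > 0" and \<beta>: "\<beta> > 0"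
    and A: "\<And>k. k \<ge> 1 \<Longrightarrow> A k \<in> events"
    and PA: "\<And>k. k \<ge> 1 \<Longrightarrow> prob (A k) \<le> C * exp (- D * real k powr \<beta>)"
  shows "prob (\<Union>k\<in>{Suc n..}. A k)
    \<le> C * (\<Sum>j. exp (- (D/2) * real (Suc j) powr \<beta>)) * exp (- (D/2) * real (Suc n) powr \<beta>)"
proof -
  define w where "w j = exp (- (D/2) * real (Suc j) powr \<beta>)" for j
  define e where "e = exp (- (D/2) * real (Suc n) powr \<beta>)"
  have w: "summable w"
    using summable_powr_mult_exp_neg_powr[of "D/2" \<beta> 0] D \<beta> unfolding w_def by simp
  have "0 \<le> C * exp (- D * real 1 powr \<beta>)"
    using order_trans[OF measure_nonneg PA[of 1]] by simp
  then have "C \<ge> 0" by (simp add: zero_le_mult_iff)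
  have bound: "prob (A (Suc n + j)) \<le> C * e * w j" for j
  proof -
    have "prob (A (Suc n + j)) \<le> C * exp (- D * real (Suc n + j) powr \<beta>)"
      by (rule PA) simp
    also have "\<dots> \<le> C * (e * w j)"
      unfolding e_def w_def using exp_neg_powr_add_le[OF D \<beta>] \<open>C \<ge> 0\<close> by (rule mult_left_mono)
    finally show ?thesis by (simp add: mult.assoc)
  qed
  have sets: "range (\<lambda>j. A (Suc n + j)) \<subseteq> events" using A by auto
  have summable: "summable (\<lambda>j. prob (A (Suc n + j)))"
    by (rule summable_comparison_test'[OF summable_mult[OF w, of "C * e"]]) (use bound in simp)
  have "{Suc n..} = plus (Suc n) ` UNIV"
    using image_add_atLeast[of "Suc n" 0] by simp
  then have "prob (\<Union>k\<in>{Suc n..}. A k) \<le> (\<Sum>j. prob (A (Suc n + j)))"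
    using finite_measure_subadditive_countably[OF sets summable] by simp
  also have "\<dots> \<le> (\<Sum>j. C * e * w j)"
    by (rule suminf_le[OF bound summable summable_mult[OF w]])
  also have "\<dots> = C * e * (\<Sum>j. w j)"
    by (rule suminf_mult[OF w])
  finally show ?thesis
    unfolding e_def w_def by (simp add: mult_ac)
qed

lemma (in prob_space) summable_powr_mult_prob_tail:
  fixes A E :: "nat \<Rightarrow> 'a set"
  assumes D: "D > 0" and \<beta>: "\<beta> > 0"
    and A: "\<And>k. k \<ge> 1 \<Longrightarrow> A k \<in> events"
    and PA: "\<And>k. k \<ge> 1 \<Longrightarrow> prob (A k) \<le> C * exp (- D * real k powr \<beta>)"
    and E: "\<And>n. E n \<subseteq> (\<Union>k\<in>{Suc n..}. A k)"
  shows "summable (\<lambda>n. real (Suc n) powr \<rho> * prob (E n))"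
proof -
  define S where "S = C * (\<Sum>j. exp (- (D/2) * real (Suc j) powr \<beta>))"
  define g where "g n = real (Suc n) powr \<rho> * exp (- (D/2) * real (Suc n) powr \<beta>)" for n :: nat
  have bound: "norm (real (Suc n) powr \<rho> * prob (E n)) \<le> S * g n" for n
  proof -
    have "(\<Union>k\<in>{Suc n..}. A k) \<in> events" using A by auto
    then have "prob (E n) \<le> prob (\<Union>k\<in>{Suc n..}. A k)"
      by (rule finite_measure_mono[OF E])
    also have "\<dots> \<le> S * exp (- (D/2) * real (Suc n) powr \<beta>)"
      using measure_UN_tail_le[OF D \<beta> A PA, of n] unfolding S_def by simp
    finally have "real (Suc n) powr \<rho> * prob (E n)
        \<le> real (Suc n) powr \<rho> * (S * exp (- (D/2) * real (Suc n) powr \<beta>))"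
      by (rule mult_left_mono) simp
    then show ?thesis
      unfolding g_def by (simp add: mult.left_commute)
  qed
  have "summable g"
    unfolding g_def using D \<beta> by (intro summable_powr_mult_exp_neg_powr) auto
  then show ?thesis
    by (rule summable_comparison_test'[OF summable_mult bound])
qed

section \<open>The population criterion\<close>

locale convex_loss =
  fixes Q :: "'s measure" and h :: "'s \<Rightarrow> real \<Rightarrow> real" and t0 :: real
  assumes h_measurable: "\<And>t. (\<lambda>x. h x t) \<in> borel_measurable Q"
    and h_convex: "\<And>x. x \<in> space Q \<Longrightarrow> convex_on UNIV (h x)"
    and integrable_rderiv: "\<And>t. integrable Q (\<lambda>x. rderiv (h x) t)"
begin

definition M :: "real \<Rightarrow> real" where
  "M = (\<lambda>t. \<integral>x. (h x t - h x t0) \<partial>Q)"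

definition mean_rderiv :: "real \<Rightarrow> real" where
  "mean_rderiv t = (\<integral>x. rderiv (h x) t \<partial>Q)"

lemma integrable_loss_diff: "integrable Q (\<lambda>x. h x v - h x u)"
proof -
  have ordered: "integrable Q (\<lambda>x. h x v - h x u)" if "u < v" for u v
  proof (rule Bochner_Integration.integrable_bound[OF _ _ AE_I2])
    show "integrable Q (\<lambda>x. (v - u) * (\<bar>rderiv (h x) u\<bar> + \<bar>rderiv (h x) v\<bar>))"
      using integrable_rderiv by auto
    show "(\<lambda>x. h x v - h x u) \<in> borel_measurable Q"
      using h_measurable by measurable
    fix x assume x: "x \<in> space Q"
    have "rderiv (h x) u \<le> (h x v - h x u) / (v - u)" "(h x v - h x u) / (v - u) \<le> rderiv (h x) v"
      using convex_on_rderiv_le_slope[OF h_convex[OF x] that]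
        convex_on_slope_le_rderiv[OF h_convex[OF x] that] by auto
    then have "\<bar>(h x v - h x u) / (v - u)\<bar> \<le> \<bar>rderiv (h x) u\<bar> + \<bar>rderiv (h x) v\<bar>"
      by linarith
    then show "norm (h x v - h x u) \<le> norm ((v - u) * (\<bar>rderiv (h x) u\<bar> + \<bar>rderiv (h x) v\<bar>))"
      using that by (simp add: abs_divide divide_le_eq mult.commute)
  qed
  consider "u < v" | "u = v" | "v < u" by linarith
  then show ?thesis
  proof cases
    case 3
    then show ?thesis using integrable_minus[OF ordered[OF 3]] by simp
  qed (auto intro: ordered)
qed

lemma M_diff: "M u - M v = (\<integral>x. (h x u - h x v) \<partial>Q)"
proof -
  have "M u - M v = (\<integral>x. ((h x u - h x t0) - (h x v - h x t0)) \<partial>Q)"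
    unfolding M_def by (intro Bochner_Integration.integral_diff[symmetric] integrable_loss_diff)
  then show ?thesis by simp
qed

lemma convex_M: "convex_on UNIV M"
proof (rule convex_onI)
  fix \<mu> x y :: real assume \<mu>: "0 < \<mu>" "\<mu> < 1"
  have "M ((1 - \<mu>) *\<^sub>R x + \<mu> *\<^sub>R y)
      \<le> (\<integral>z. ((1 - \<mu>) * (h z x - h z t0) + \<mu> * (h z y - h z t0)) \<partial>Q)"
    unfolding M_def
  proof (rule integral_mono)
    fix z assume "z \<in> space Q"
    then show "h z ((1 - \<mu>) *\<^sub>R x + \<mu> *\<^sub>R y) - h z t0
        \<le> (1 - \<mu>) * (h z x - h z t0) + \<mu> * (h z y - h z t0)"
      using convex_onD[OF h_convex, of z \<mu> x y] \<mu> by (simp add: algebra_simps)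
  qed (use integrable_loss_diff in auto)
  also have "\<dots> = (1 - \<mu>) * M x + \<mu> * M y"
    unfolding M_def using integrable_loss_diff by simp
  finally show "M ((1 - \<mu>) *\<^sub>R x + \<mu> *\<^sub>R y) \<le> (1 - \<mu>) * M x + \<mu> * M y" .
qed simp

lemma slope_M_le_mean_rderiv:
  assumes "v < u" shows "(M u - M v) / (u - v) \<le> mean_rderiv u"
proof -
  have "(M u - M v) / (u - v) = (\<integral>x. (h x u - h x v) / (u - v) \<partial>Q)"
    unfolding M_diff by simp
  also have "\<dots> \<le> mean_rderiv u"
    unfolding mean_rderiv_def
    using integrable_loss_diff integrable_rderiv convex_on_slope_le_rderiv[OF h_convex assms]
    by (intro integral_mono) auto
  finally show ?thesis .
qed

lemma mean_rderiv_le_slope_M: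
  assumes "u < w" shows "mean_rderiv u \<le> (M w - M u) / (w - u)"
proof -
  have "mean_rderiv u \<le> (\<integral>x. (h x w - h x u) / (w - u) \<partial>Q)"
    unfolding mean_rderiv_def
    using integrable_loss_diff integrable_rderiv convex_on_rderiv_le_slope[OF h_convex assms]
    by (intro integral_mono) auto
  also have "\<dots> = (M w - M u) / (w - u)"
    unfolding M_diff by simp
  finally show ?thesis .
qed

text \<open>We never identify \<open>mean_rderiv\<close> with \<open>rderiv M\<close> (that would need monotone
  convergence); being squeezed between slopes of \<open>M\<close> suffices.\<close>

lemma mean_rderiv_right_ge:
  assumes "0 \<le> rderiv M m" and "0 < x" and "y \<le> \<bar>rderiv M (m + x/2)\<bar>"
  shows "y \<le> mean_rderiv (m + x)"
proof -
  have "rderiv M m \<le> (M (m + x/2) - M m) / ((m + x/2) - m)"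
    using convex_on_rderiv_le_slope[OF convex_M, of m "m + x/2"] \<open>0 < x\<close> by simp
  also have "\<dots> \<le> rderiv M (m + x/2)"
    using convex_on_slope_le_rderiv[OF convex_M, of m "m + x/2"] \<open>0 < x\<close> by simp
  finally have "y \<le> rderiv M (m + x/2)" using assms by linarith
  also have "\<dots> \<le> (M (m + x) - M (m + x/2)) / ((m + x) - (m + x/2))"
    using convex_on_rderiv_le_slope[OF convex_M, of "m + x/2" "m + x"] \<open>0 < x\<close> by simp
  also have "\<dots> \<le> mean_rderiv (m + x)"
    using slope_M_le_mean_rderiv[of "m + x/2" "m + x"] \<open>0 < x\<close> by simp
  finally show ?thesis .
qed

lemma mean_rderiv_left_le:
  assumes "lderiv M m \<le> 0" and "0 < x" and "y \<le> \<bar>rderiv M (m - x/2)\<bar>"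
  shows "mean_rderiv (m - x) \<le> - y"
proof -
  have "mean_rderiv (m - x) \<le> (M (m - x/2) - M (m - x)) / ((m - x/2) - (m - x))"
    using mean_rderiv_le_slope_M[of "m - x" "m - x/2"] \<open>0 < x\<close> by simp
  also have "\<dots> \<le> rderiv M (m - x/2)"
    using convex_on_slope_le_rderiv[OF convex_M, of "m - x" "m - x/2"] \<open>0 < x\<close> by simp
  finally have *: "mean_rderiv (m - x) \<le> rderiv M (m - x/2)" .
  have "rderiv M (m - x/2) \<le> (M m - M (m - x/2)) / (m - (m - x/2))"
    using convex_on_rderiv_le_slope[OF convex_M, of "m - x/2" m] \<open>0 < x\<close> by simp
  also have "\<dots> \<le> lderiv M m"
    using convex_on_slope_le_lderiv[OF convex_M, of "m - x/2" m] \<open>0 < x\<close> by simp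
  finally have "rderiv M (m - x/2) \<le> - y" using assms by linarith
  with * show ?thesis by linarith
qed

end

section \<open>The M-estimator and its empirical right derivative\<close>

lemma hoeffding_iid_mean:
  fixes Y :: "'a \<Rightarrow> real" and Z :: "'i \<Rightarrow> 'a \<Rightarrow> real"
  assumes "prob_space P" and "finite I" "I \<noteq> {}"
    and "prob_space.indep_vars P (\<lambda>_. borel) Z I"
    and "\<And>i. i \<in> I \<Longrightarrow> distr P borel (Z i) = distr P borel Y"
    and "Y \<in> borel_measurable P" and "AE x in P. Y x \<in> {A..B}"
    and AB: "A < B" and e: "e \<ge> 0"
  shows "measure P {x\<in>space P. (\<Sum>i\<in>I. Z i x) / real (card I) \<le> integral\<^sup>L P Y - e}
            \<le> exp (- 2 * real (card I) * e\<^sup>2 / (B - A)\<^sup>2)"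
    and "measure P {x\<in>space P. (\<Sum>i\<in>I. Z i x) / real (card I) \<ge> integral\<^sup>L P Y + e}
            \<le> exp (- 2 * real (card I) * e\<^sup>2 / (B - A)\<^sup>2)"
proof -
  interpret iid_interval_bounded_random_variables P I Z Y A B
    by (rule iid_interval_bounded_random_variables.intro)
       (rule assms iid_interval_bounded_random_variables_axioms.intro; fact)+
  interpret Hoeffding_ineq_iid P I Z Y A B "integral\<^sup>L P Y"
    by unfold_locales
  show "measure P {x\<in>space P. (\<Sum>i\<in>I. Z i x) / real (card I) \<le> integral\<^sup>L P Y - e}
            \<le> exp (- 2 * real (card I) * e\<^sup>2 / (B - A)\<^sup>2)"
    using Hoeffding_ineq_le'[OF e AB \<open>I \<noteq> {}\<close>] by simp
  show "measure P {x\<in>space P. (\<Sum>i\<in>I. Z i x) / real (card I) \<ge> integral\<^sup>L P Y + e}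
            \<le> exp (- 2 * real (card I) * e\<^sup>2 / (B - A)\<^sup>2)"
    using Hoeffding_ineq_ge'[OF e AB \<open>I \<noteq> {}\<close>] by simp
qed

locale convex_M_estimation = convex_loss Q h t0
  for Q :: "'s measure" and h :: "'s \<Rightarrow> real \<Rightarrow> real" and t0 :: real +
  fixes P :: "'w measure" and X :: "nat \<Rightarrow> 'w \<Rightarrow> 's" and mhat :: "nat \<Rightarrow> 'w \<Rightarrow> real"
  assumes prob_P: "prob_space P"
    and X_indep: "prob_space.indep_vars P (\<lambda>_. Q) X {1..}"
    and X_law: "\<And>i. i \<ge> 1 \<Longrightarrow> distr P Q (X i) = Q"
    and mhat_min: "\<And>n \<omega> t. n \<ge> 1 \<Longrightarrow> \<omega> \<in> space P \<Longrightarrow>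
        (\<Sum>i=1..n. h (X i \<omega>) (mhat n \<omega>) - h (X i \<omega>) t0) / real n
          \<le> (\<Sum>i=1..n. h (X i \<omega>) t - h (X i \<omega>) t0) / real n"
    and mhat_least: "\<And>n \<omega> t. n \<ge> 1 \<Longrightarrow> \<omega> \<in> space P \<Longrightarrow>
        (\<forall>s. (\<Sum>i=1..n. h (X i \<omega>) t - h (X i \<omega>) t0) / real n
              \<le> (\<Sum>i=1..n. h (X i \<omega>) s - h (X i \<omega>) t0) / real n) \<Longrightarrow> mhat n \<omega> \<le> t"
    and mhat_measurable: "\<And>n. n \<ge> 1 \<Longrightarrow> mhat n \<in> borel_measurable P"
begin

interpretation P: prob_space P by (rule prob_P)

definition empirical_loss :: "nat \<Rightarrow> 'w \<Rightarrow> real \<Rightarrow> real" where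
  "empirical_loss n \<omega> t = (\<Sum>i=1..n. h (X i \<omega>) t)"

lemma X_measurable: "i \<ge> 1 \<Longrightarrow> X i \<in> measurable P Q"
  using X_indep by (auto simp: P.indep_vars_def)

lemma rderiv_X_measurable: "i \<ge> 1 \<Longrightarrow> (\<lambda>\<omega>. rderiv (h (X i \<omega>)) t) \<in> borel_measurable P"
  using measurable_compose[OF X_measurable borel_measurable_integrable[OF integrable_rderiv]] by simp

lemma sum_rderiv_X_measurable [measurable]:
  "(\<lambda>\<omega>. \<Sum>i=1..n. rderiv (h (X i \<omega>)) t) \<in> borel_measurable P"
  by (intro borel_measurable_sum rderiv_X_measurable) auto

lemma convex_empirical_loss:
  "\<omega> \<in> space P \<Longrightarrow> convex_on UNIV (empirical_loss n \<omega>)"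
  unfolding empirical_loss_def
  by (intro convex_on_sum_fun h_convex measurable_space[OF X_measurable]) auto

lemma rderiv_empirical_loss:
  "\<omega> \<in> space P \<Longrightarrow> rderiv (empirical_loss n \<omega>) t = (\<Sum>i=1..n. rderiv (h (X i \<omega>)) t)"
  unfolding empirical_loss_def
  by (intro rderiv_sum_convex h_convex measurable_space[OF X_measurable]) auto

lemma mhat_minimises_empirical_loss:
  assumes "n \<ge> 1" "\<omega> \<in> space P"
  shows "empirical_loss n \<omega> (mhat n \<omega>) \<le> empirical_loss n \<omega> u"
  using mhat_min[OF assms, of u] assms(1)
  by (simp add: empirical_loss_def sum_subtractf divide_le_cancel)

lemma mhat_least_minimiser:
  assumes "n \<ge> 1" "\<omega> \<in> space P" "\<forall>s. empirical_loss n \<omega> u \<le> empirical_loss n \<omega> s"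
  shows "mhat n \<omega> \<le> u"
  using mhat_least[OF assms(1,2), of u] assms
  by (simp add: empirical_loss_def sum_subtractf divide_le_cancel)

lemma hoeffding_rderiv:
  assumes n: "n \<ge> 1" and AB: "A < B"
    and bounded: "AE \<omega> in P. A \<le> rderiv (h (X 1 \<omega>)) t \<and> rderiv (h (X 1 \<omega>)) t \<le> B"
    and e: "0 \<le> e"
  shows "measure P {\<omega>\<in>space P. (\<Sum>i=1..n. rderiv (h (X i \<omega>)) t) / real n \<le> mean_rderiv t - e}
           \<le> exp (- 2 * real n * e\<^sup>2 / (B - A)\<^sup>2)"
    and "measure P {\<omega>\<in>space P. (\<Sum>i=1..n. rderiv (h (X i \<omega>)) t) / real n \<ge> mean_rderiv t + e}
           \<le> exp (- 2 * real n * e\<^sup>2 / (B - A)\<^sup>2)"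
proof -
  define g where "g = (\<lambda>x. rderiv (h x) t)"
  have g: "g \<in> borel_measurable Q"
    unfolding g_def using integrable_rderiv by auto
  have law: "distr P borel (\<lambda>\<omega>. g (X i \<omega>)) = distr Q borel g" if "i \<ge> 1" for i
    using distr_distr[OF g X_measurable[OF that]] X_law[OF that] by (simp add: o_def)
  have indep: "P.indep_vars (\<lambda>_. borel) (\<lambda>i \<omega>. g (X i \<omega>)) {1..n}"
    by (rule P.indep_vars_compose2[OF P.indep_vars_subset[OF X_indep]]) (auto intro: g)
  have mean: "integral\<^sup>L P (\<lambda>\<omega>. g (X 1 \<omega>)) = mean_rderiv t"
    using integral_distr[OF X_measurable g, of 1] X_law[of 1] by (simp add: mean_rderiv_def g_def)
  have same_law: "distr P borel (\<lambda>\<omega>. g (X i \<omega>)) = distr P borel (\<lambda>\<omega>. g (X 1 \<omega>))"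
    if "i \<in> {1..n}" for i
    using law[of i] law[of 1] that by simp
  have measurable: "(\<lambda>\<omega>. g (X 1 \<omega>)) \<in> borel_measurable P"
    using rderiv_X_measurable[of 1 t] by (simp add: g_def)
  have bounded': "AE \<omega> in P. g (X 1 \<omega>) \<in> {A..B}"
    using bounded by (auto simp: g_def elim: eventually_mono)
  have "{1..n} \<noteq> {}" using n by simp
  note hoeffding = hoeffding_iid_mean[OF prob_P finite_atLeastAtMost this indep same_law
      measurable bounded' AB e, unfolded mean]
  show "measure P {\<omega>\<in>space P. (\<Sum>i=1..n. rderiv (h (X i \<omega>)) t) / real n \<le> mean_rderiv t - e}
           \<le> exp (- 2 * real n * e\<^sup>2 / (B - A)\<^sup>2)"
   and "measure P {\<omega>\<in>space P. (\<Sum>i=1..n. rderiv (h (X i \<omega>)) t) / real n \<ge> mean_rderiv t + e}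
           \<le> exp (- 2 * real n * e\<^sup>2 / (B - A)\<^sup>2)"
    using hoeffding by (simp_all add: g_def)
qed

lemma prob_mhat_gt:
  assumes n: "n \<ge> 1" and "A < B"
    and bounded: "AE \<omega> in P. A \<le> rderiv (h (X 1 \<omega>)) t \<and> rderiv (h (X 1 \<omega>)) t \<le> B"
    and pos: "0 \<le> mean_rderiv t"
  shows "measure P {\<omega>\<in>space P. t < mhat n \<omega>} \<le> exp (- 2 * real n * (mean_rderiv t)\<^sup>2 / (B - A)\<^sup>2)"
proof -
  have "{\<omega>\<in>space P. t < mhat n \<omega>}
      \<subseteq> {\<omega>\<in>space P. (\<Sum>i=1..n. rderiv (h (X i \<omega>)) t) / real n \<le> mean_rderiv t - mean_rderiv t}"
  proof safe
    fix \<omega> assume \<omega>: "\<omega> \<in> space P" "t < mhat n \<omega>"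
    have "rderiv (empirical_loss n \<omega>) t < 0"
      using convex_on_rderiv_neg_left_of_least_min[OF convex_empirical_loss
          mhat_minimises_empirical_loss mhat_least_minimiser] n \<omega> by blast
    then show "(\<Sum>i=1..n. rderiv (h (X i \<omega>)) t) / real n \<le> mean_rderiv t - mean_rderiv t"
      using \<omega> n by (auto simp: rderiv_empirical_loss intro!: divide_nonpos_pos)
  qed
  then have "measure P {\<omega>\<in>space P. t < mhat n \<omega>}
      \<le> measure P {\<omega>\<in>space P. (\<Sum>i=1..n. rderiv (h (X i \<omega>)) t) / real n \<le> mean_rderiv t - mean_rderiv t}"
    by (intro P.finite_measure_mono) measurable
  also have "\<dots> \<le> exp (- 2 * real n * (mean_rderiv t)\<^sup>2 / (B - A)\<^sup>2)"
    by (rule hoeffding_rderiv(1)[OF n \<open>A < B\<close> bounded pos])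
  finally show ?thesis .
qed

lemma prob_mhat_lt:
  assumes n: "n \<ge> 1" and "A < B"
    and bounded: "AE \<omega> in P. A \<le> rderiv (h (X 1 \<omega>)) t \<and> rderiv (h (X 1 \<omega>)) t \<le> B"
    and neg: "mean_rderiv t \<le> 0"
  shows "measure P {\<omega>\<in>space P. mhat n \<omega> < t} \<le> exp (- 2 * real n * (mean_rderiv t)\<^sup>2 / (B - A)\<^sup>2)"
proof -
  have "{\<omega>\<in>space P. mhat n \<omega> < t}
      \<subseteq> {\<omega>\<in>space P. (\<Sum>i=1..n. rderiv (h (X i \<omega>)) t) / real n \<ge> mean_rderiv t + - mean_rderiv t}"
  proof safe
    fix \<omega> assume \<omega>: "\<omega> \<in> space P" "mhat n \<omega> < t"
    have "0 \<le> rderiv (empirical_loss n \<omega>) t"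
      using convex_on_rderiv_nonneg_right_of_min[OF convex_empirical_loss
          mhat_minimises_empirical_loss] n \<omega> by (meson less_imp_le)
    then show "(\<Sum>i=1..n. rderiv (h (X i \<omega>)) t) / real n \<ge> mean_rderiv t + - mean_rderiv t"
      using \<omega> by (simp add: rderiv_empirical_loss)
  qed
  then have "measure P {\<omega>\<in>space P. mhat n \<omega> < t}
      \<le> measure P {\<omega>\<in>space P. (\<Sum>i=1..n. rderiv (h (X i \<omega>)) t) / real n \<ge> mean_rderiv t + - mean_rderiv t}"
    by (intro P.finite_measure_mono) measurable
  also have "\<dots> \<le> exp (- 2 * real n * (- mean_rderiv t)\<^sup>2 / (B - A)\<^sup>2)"
    using neg by (intro hoeffding_rderiv(2)[OF n \<open>A < B\<close> bounded]) simp
  finally show ?thesis by simp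
qed

end

section \<open>Exponential concentration around a well-separated minimum\<close>

locale well_separated_minimum = convex_M_estimation Q h t0 P X mhat
  for Q :: "'s measure" and h :: "'s \<Rightarrow> real \<Rightarrow> real" and t0 :: real
    and P :: "'w measure" and X :: "nat \<Rightarrow> 'w \<Rightarrow> 's" and mhat :: "nat \<Rightarrow> 'w \<Rightarrow> real" +
  fixes m c \<delta> :: real and a b :: "real \<Rightarrow> real"
  assumes m_crit: "lderiv (\<lambda>t. \<integral>x. (h x t - h x t0) \<partial>Q) m \<le> 0"
                  "0 \<le> rderiv (\<lambda>t. \<integral>x. (h x t - h x t0) \<partial>Q) m"
    and bounded_rderiv: "\<And>x. x \<noteq> 0 \<Longrightarrow> a x < b x \<and>
        (AE \<omega> in P. a x \<le> rderiv (h (X 1 \<omega>)) (m + x) \<and> rderiv (h (X 1 \<omega>)) (m + x) \<le> b x)"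
    and c_pos: "c > 0" and \<delta>_pos: "\<delta> > 0"
    and growth: "\<And>x. x \<in> {-\<delta>..\<delta>} \<Longrightarrow>
        \<bar>rderiv (\<lambda>t. \<integral>y. (h y t - h y t0) \<partial>Q) (m + x)\<bar> \<ge> c * \<bar>x\<bar>"
begin

interpretation P: prob_space P by (rule prob_P)

lemma mean_rderiv_right_of_m:
  assumes "0 < x" "x \<le> \<delta>" shows "c * x / 2 \<le> mean_rderiv (m + x)"
  using mean_rderiv_right_ge[of m x "c * x / 2"] m_crit(2) growth[of "x/2"] assms c_pos
  by (simp add: M_def[symmetric])

lemma mean_rderiv_left_of_m:
  assumes "0 < x" "x \<le> \<delta>" shows "mean_rderiv (m - x) \<le> - (c * x / 2)"
  using mean_rderiv_left_le[of m x "c * x / 2"] m_crit(1) growth[of "- x/2"] assms c_pos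
  by (simp add: M_def[symmetric])

lemma hoeffding_exponent_le:
  assumes "z \<noteq> 0" "b z - a z \<le> L" "0 < x" "c * x / 2 \<le> \<bar>E\<bar>"
  shows "exp (- 2 * real n * E\<^sup>2 / (b z - a z)\<^sup>2) \<le> exp (- (c\<^sup>2 / (2 * L\<^sup>2)) * (real n * x\<^sup>2))"
proof -
  have "a z < b z" using bounded_rderiv[OF \<open>z \<noteq> 0\<close>] by simp
  have "\<bar>c * x / 2\<bar> \<le> \<bar>E\<bar>" using assms c_pos by simp
  then have "(c * x / 2)\<^sup>2 \<le> E\<^sup>2" by (simp only: abs_le_square_iff)
  moreover have "(b z - a z)\<^sup>2 \<le> L\<^sup>2" using assms \<open>a z < b z\<close> by (intro power_mono) auto
  ultimately have "(c * x / 2)\<^sup>2 / L\<^sup>2 \<le> E\<^sup>2 / (b z - a z)\<^sup>2"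
    using \<open>a z < b z\<close> by (intro frac_le) auto
  then have "2 * real n * ((c * x / 2)\<^sup>2 / L\<^sup>2) \<le> 2 * real n * (E\<^sup>2 / (b z - a z)\<^sup>2)"
    by (intro mult_left_mono) auto
  moreover have "(c\<^sup>2 / (2 * L\<^sup>2)) * (real n * x\<^sup>2) = 2 * real n * ((c * x / 2)\<^sup>2 / L\<^sup>2)"
    by (simp add: power_mult_distrib power2_eq_square divide_simps)
  ultimately show ?thesis by simp
qed

lemma prob_mhat_gt_m:
  assumes n: "n \<ge> 1" and x: "0 < x" "x \<le> \<delta>" and width: "b x - a x \<le> L"
  shows "measure P {\<omega>\<in>space P. m + x < mhat n \<omega>} \<le> exp (- (c\<^sup>2 / (2 * L\<^sup>2)) * (real n * x\<^sup>2))"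
proof -
  have "0 \<le> mean_rderiv (m + x)"
    using mean_rderiv_right_of_m[OF x] mult_pos_pos[OF c_pos x(1)] by linarith
  then have "measure P {\<omega>\<in>space P. m + x < mhat n \<omega>}
      \<le> exp (- 2 * real n * (mean_rderiv (m + x))\<^sup>2 / (b x - a x)\<^sup>2)"
    by (intro prob_mhat_gt[OF n]) (use bounded_rderiv[of x] x in auto)
  also have "\<dots> \<le> exp (- (c\<^sup>2 / (2 * L\<^sup>2)) * (real n * x\<^sup>2))"
    using mean_rderiv_right_of_m[OF x] x
    by (intro hoeffding_exponent_le[OF _ width]) auto
  finally show ?thesis .
qed

lemma prob_mhat_lt_m:
  assumes n: "n \<ge> 1" and x: "0 < x" "x \<le> \<delta>" and width: "b (- x) - a (- x) \<le> L"
  shows "measure P {\<omega>\<in>space P. mhat n \<omega> < m - x} \<le> exp (- (c\<^sup>2 / (2 * L\<^sup>2)) * (real n * x\<^sup>2))"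
proof -
  have "mean_rderiv (m + - x) \<le> 0"
    using mean_rderiv_left_of_m[OF x] mult_pos_pos[OF c_pos x(1)] by simp
  then have "measure P {\<omega>\<in>space P. mhat n \<omega> < m + - x}
      \<le> exp (- 2 * real n * (mean_rderiv (m + - x))\<^sup>2 / (b (- x) - a (- x))\<^sup>2)"
    by (intro prob_mhat_lt[OF n]) (use bounded_rderiv[of "- x"] x in auto)
  also have "\<dots> \<le> exp (- (c\<^sup>2 / (2 * L\<^sup>2)) * (real n * x\<^sup>2))"
    using mean_rderiv_left_of_m[OF x] x
    by (intro hoeffding_exponent_le[OF _ width]) auto
  finally show ?thesis by simp
qed

lemma prob_deviation:
  assumes n: "n \<ge> 1" and x: "0 < x" "x \<le> \<delta>"
    and width: "b x - a x \<le> L" "b (- x) - a (- x) \<le> L"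
  shows "measure P {\<omega>\<in>space P. x < \<bar>mhat n \<omega> - m\<bar>}
    \<le> 2 * exp (- (c\<^sup>2 / (2 * L\<^sup>2)) * (real n * x\<^sup>2))"
proof -
  have [measurable]: "mhat n \<in> borel_measurable P" by (rule mhat_measurable[OF n])
  have "{\<omega>\<in>space P. x < \<bar>mhat n \<omega> - m\<bar>}
      \<subseteq> {\<omega>\<in>space P. m + x < mhat n \<omega>} \<union> {\<omega>\<in>space P. mhat n \<omega> < m - x}"
    by auto
  then have "measure P {\<omega>\<in>space P. x < \<bar>mhat n \<omega> - m\<bar>}
      \<le> measure P ({\<omega>\<in>space P. m + x < mhat n \<omega>} \<union> {\<omega>\<in>space P. mhat n \<omega> < m - x})"
    by (rule P.finite_measure_mono) measurable
  also have "\<dots> \<le> measure P {\<omega>\<in>space P. m + x < mhat n \<omega>}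
      + measure P {\<omega>\<in>space P. mhat n \<omega> < m - x}"
    by (rule measure_Un_le) measurable
  also have "\<dots> \<le> 2 * exp (- (c\<^sup>2 / (2 * L\<^sup>2)) * (real n * x\<^sup>2))"
    using prob_mhat_gt_m[OF n x width(1)] prob_mhat_lt_m[OF n x width(2)] by simp
  finally show ?thesis .
qed

lemma powr_neg_square_mult:
  fixes x :: real assumes "x > 0"
  shows "x * (\<theta> * x powr (- g))\<^sup>2 = \<theta>\<^sup>2 * x powr (1 - 2 * g)"
proof -
  have "x * (\<theta> * x powr (- g))\<^sup>2 = \<theta>\<^sup>2 * (x powr 1 * x powr (- g) * x powr (- g))"
    using assms by (simp add: power2_eq_square)
  also have "\<dots> = \<theta>\<^sup>2 * x powr (1 + - g + - g)"
    by (simp only: powr_add)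
  finally show ?thesis by simp
qed

lemma prob_deviation_powr:
  assumes k: "k \<ge> 1" and g: "0 \<le> g" and \<theta>: "0 < \<theta>" "\<theta> \<le> \<delta>"
    and width: "\<And>z. z \<noteq> 0 \<Longrightarrow> \<bar>z\<bar> \<le> \<theta> \<Longrightarrow> b z - a z \<le> L"
  shows "measure P {\<omega>\<in>space P. \<theta> * real k powr (- g) < \<bar>mhat k \<omega> - m\<bar>}
    \<le> 2 * exp (- (c\<^sup>2 / (2 * L\<^sup>2) * \<theta>\<^sup>2) * real k powr (1 - 2 * g))"
proof -
  have "real k powr (- g) \<le> 1" "0 < real k powr (- g)"
    using powr_mono[of "- g" 0 "real k"] k g by auto
  then have x: "0 < \<theta> * real k powr (- g)" "\<theta> * real k powr (- g) \<le> \<theta>"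
    using \<theta> by (auto simp: mult_left_le)
  have "b (\<theta> * real k powr (- g)) - a (\<theta> * real k powr (- g)) \<le> L"
    "b (- (\<theta> * real k powr (- g))) - a (- (\<theta> * real k powr (- g))) \<le> L"
    using x by (auto intro!: width)
  then show ?thesis
    using prob_deviation[OF k x(1) order_trans[OF x(2) \<theta>(2)]] powr_neg_square_mult[of "real k" \<theta> g] k
    by (simp add: mult.assoc)
qed

lemma summable_weighted_sup_deviation:
  assumes L: "L > 0" and width: "\<forall>\<^sub>F z in at 0. b z - a z \<le> L"
    and \<gamma>: "\<gamma> < 1/2" and \<epsilon>: "\<epsilon> > 0"
  shows "summable (\<lambda>n::nat. real (Suc n) powr (r - 1) *
    measure P {\<omega> \<in> space P.
      (SUP k\<in>{Suc n..}. ereal (real (Suc n) powr \<gamma> * \<bar>mhat k \<omega> - m\<bar>)) > ereal \<epsilon>})"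
proof -
  obtain \<eta> where \<eta>: "\<eta> > 0" and width_near: "\<And>z. z \<noteq> 0 \<Longrightarrow> \<bar>z\<bar> < \<eta> \<Longrightarrow> b z - a z \<le> L"
    using width unfolding eventually_at by (auto simp: dist_real_def)
  define g where "g = max \<gamma> 0"
  define \<theta> where "\<theta> = min \<epsilon> (min \<delta> (\<eta> / 2))"
  have g: "0 \<le> g" "\<gamma> \<le> g" "1 - 2 * g > 0" using \<gamma> by (auto simp: g_def)
  have \<theta>: "0 < \<theta>" "\<theta> \<le> \<delta>" "\<theta> < \<eta>" "\<theta> \<le> \<epsilon>" using \<eta> \<epsilon> \<delta>_pos by (auto simp: \<theta>_def)
  define A where "A k = {\<omega>\<in>space P. \<theta> * real k powr (- g) < \<bar>mhat k \<omega> - m\<bar>}" for k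
  have events: "A k \<in> P.events" if "k \<ge> 1" for k
  proof -
    have [measurable]: "mhat k \<in> borel_measurable P" by (rule mhat_measurable[OF that])
    show ?thesis unfolding A_def by measurable
  qed
  have prob: "P.prob (A k) \<le> 2 * exp (- (c\<^sup>2 / (2 * L\<^sup>2) * \<theta>\<^sup>2) * real k powr (1 - 2 * g))"
    if "k \<ge> 1" for k
    unfolding A_def using \<theta> by (intro prob_deviation_powr[OF that g(1)] width_near) auto
  have subset: "{\<omega> \<in> space P.
      (SUP k\<in>{Suc n..}. ereal (real (Suc n) powr \<gamma> * \<bar>mhat k \<omega> - m\<bar>)) > ereal \<epsilon>}
      \<subseteq> (\<Union>k\<in>{Suc n..}. A k)" for n
  proof
    fix \<omega> assume "\<omega> \<in> {\<omega> \<in> space P.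
      (SUP k\<in>{Suc n..}. ereal (real (Suc n) powr \<gamma> * \<bar>mhat k \<omega> - m\<bar>)) > ereal \<epsilon>}"
    then obtain k where \<omega>: "\<omega> \<in> space P" and k: "k \<ge> Suc n"
      and large: "\<epsilon> < real (Suc n) powr \<gamma> * \<bar>mhat k \<omega> - m\<bar>"
      by (auto simp: less_SUP_iff)
    have "real (Suc n) powr \<gamma> \<le> real k powr g"
      using powr_mono[OF g(2), of "real (Suc n)"] powr_mono2[OF g(1), of "real (Suc n)" "real k"] k
      by simp
    then have "\<theta> < real k powr g * \<bar>mhat k \<omega> - m\<bar>"
      using large \<theta>(4) mult_right_mono[of _ _ "\<bar>mhat k \<omega> - m\<bar>"] by fastforce
    then have "\<omega> \<in> A k"
      using \<omega> k by (simp add: A_def powr_minus_divide divide_less_eq mult.commute)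
    with k show "\<omega> \<in> (\<Union>k\<in>{Suc n..}. A k)" by auto
  qed
  show ?thesis
    by (rule P.summable_powr_mult_prob_tail[OF _ _ events prob subset])
      (use c_pos L \<theta>(1) g(3) in auto)
qed

end

theorem corollary1:
  fixes Q :: "'s measure" and P :: "'w measure"
    and h :: "'s \<Rightarrow> real \<Rightarrow> real"
    and t0 :: real
    and X :: "nat \<Rightarrow> 'w \<Rightarrow> 's"
    and mhat :: "nat \<Rightarrow> 'w \<Rightarrow> real"
    and m c \<delta> :: real
    and a b :: "real \<Rightarrow> real"
  assumes probQ: "prob_space Q"
    and probP: "prob_space P"
    and h_meas: "\<And>t. (\<lambda>x. h x t) \<in> borel_measurable Q"
    and h_convex: "\<And>x. x \<in> space Q \<Longrightarrow> convex_on UNIV (h x)"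
    and int_rderiv: "\<And>t. integrable Q (\<lambda>x. rderiv (h x) t)"
    and int_lderiv: "\<And>t. integrable Q (\<lambda>x. lderiv (h x) t)"
    and X_indep: "prob_space.indep_vars P (\<lambda>_. Q) X {1..}"
    and X_law: "\<And>i. i \<ge> 1 \<Longrightarrow> distr P Q (X i) = Q"
    and mhat_min: "\<And>n \<omega> t. n \<ge> 1 \<Longrightarrow> \<omega> \<in> space P \<Longrightarrow>
        (\<Sum>i=1..n. h (X i \<omega>) (mhat n \<omega>) - h (X i \<omega>) t0) / real n
          \<le> (\<Sum>i=1..n. h (X i \<omega>) t - h (X i \<omega>) t0) / real n"
    and mhat_least: "\<And>n \<omega> t. n \<ge> 1 \<Longrightarrow> \<omega> \<in> space P \<Longrightarrow>
        (\<forall>s. (\<Sum>i=1..n. h (X i \<omega>) t - h (X i \<omega>) t0) / real n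
              \<le> (\<Sum>i=1..n. h (X i \<omega>) s - h (X i \<omega>) t0) / real n) \<Longrightarrow> mhat n \<omega> \<le> t"
    and mhat_meas: "\<And>n. n \<ge> 1 \<Longrightarrow> mhat n \<in> borel_measurable P"
    and m_crit: "lderiv (\<lambda>t. \<integral>x. (h x t - h x t0) \<partial>Q) m \<le> 0"
                "0 \<le> rderiv (\<lambda>t. \<integral>x. (h x t - h x t0) \<partial>Q) m"
    and condB: "\<And>x. x \<noteq> 0 \<Longrightarrow> a x < b x \<and>
        (AE \<omega> in P. a x \<le> rderiv (h (X 1 \<omega>)) (m + x) \<and> rderiv (h (X 1 \<omega>)) (m + x) \<le> b x)"
    and a_lim: "\<exists>L. (a \<longlongrightarrow> L) (at_right 0)" "\<exists>L. (a \<longlongrightarrow> L) (at_left 0)"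
    and b_lim: "\<exists>L. (b \<longlongrightarrow> L) (at_right 0)" "\<exists>L. (b \<longlongrightarrow> L) (at_left 0)"
    and c_pos: "c > 0" and \<delta>_pos: "\<delta> > 0"
    and growth: "\<And>x. x \<in> {-\<delta>..\<delta>} \<Longrightarrow>
        \<bar>rderiv (\<lambda>t. \<integral>y. (h y t - h y t0) \<partial>Q) (m + x)\<bar> \<ge> c * \<bar>x\<bar>"
  shows "\<forall>\<gamma> r \<epsilon>. \<gamma> < 1/2 \<longrightarrow> r > 0 \<longrightarrow> \<epsilon> > 0 \<longrightarrow>
     summable (\<lambda>n::nat. real (Suc n) powr (r - 1) *
        measure P {\<omega> \<in> space P.
           (SUP k\<in>{Suc n..}. ereal (real (Suc n) powr \<gamma> * \<bar>mhat k \<omega> - m\<bar>)) > ereal \<epsilon>})"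
proof -
  interpret well_separated_minimum Q h t0 P X mhat m c \<delta> a b
    by (intro well_separated_minimum.intro convex_M_estimation.intro convex_loss.intro
        convex_M_estimation_axioms.intro well_separated_minimum_axioms.intro) (fact assms)+
  obtain la lb where left: "(a \<longlongrightarrow> la) (at_left 0)" "(b \<longlongrightarrow> lb) (at_left 0)"
    using a_lim(2) b_lim(2) by blast
  obtain ra rb where right: "(a \<longlongrightarrow> ra) (at_right 0)" "(b \<longlongrightarrow> rb) (at_right 0)"
    using a_lim(1) b_lim(1) by blast
  obtain L where "L > 0" "\<forall>\<^sub>F z in at 0. b z - a z \<le> L"
    using eventually_le_at_of_one_sided_limits[OF tendsto_diff[OF left(2,1)] tendsto_diff[OF right(2,1)]]
    by blast
  then show ?thesis
    using summable_weighted_sup_deviation by blast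
qed

end
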